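(* Let $I$ and $J$ be intervals of $B$ and $\epsilon\ge0$. If $k_I$ and $k_J$ are $\Lambda_\epsilon$-interleaved, then either $I$ and $J$ are of the same type, or $k_I$ and $k_J$ are both $\Lambda_{2\epsilon}$-trivial.
   Context: Let $k$ be a field. The bipath poset $B$ has underlying set $(\mathbb{R}\times\{1,2\})\sqcup\{-\infty,+\infty\}$. Its order is: $x\le y$ iff $x=-\infty$, or $y=+\infty$, or $x=(s,i)$, $y=(t,i)$ with the same $i$ and $s\le t$. An interval of $B$ is a nonempty convex and connected subset (convex: $p,q\in I$, $p\le r\le q$ imply $r\in I$; connected: any two elements are joined by a finite sequence in $I$ with consecutive ones comparable). The interval module $k_I$ (a functor $B\to$ $k$-vector spaces) is $k$ on $I$ and $0$ elsewhere, with identity maps within $I$ and zero maps otherwise. The types of intervals are: - $\mathcal{U}$: intervals contained in $\mathbb{R}\times\{1\}$; - $\mathcal{D}$: intervals contained in $\mathbb{R}\times\{2\}$; - $\mathcal{B}=\{B\}$; - $\mathcal{L}$: intervals $\neq B$ containing $-\infty$; - $\mathcal{R}$: intervals $\neq B$ containing $+\infty$. Two intervals are of the same type if they lie in the same one of these sets. For $\epsilon\ge0$, $\Lambda_\epsilon\colon B\to B$ sends $(r,i)\mapsto(r+\epsilon,i)$ and fixes $\pm\infty$. Then: - $V(\epsilon)_b=V_{\Lambda_\epsilon b}$ and $V(\epsilon)(b,b')=V(\Lambda_\epsilon b,\Lambda_\epsilon b')$; $\phi(\epsilon)$ has components $\phi_{\Lambda_\epsilon b}$; - $V_{0\to\epsilon}$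 has components $V(b,\Lambda_\epsilon b)$; - $V$ is $\Lambda_\epsilon$-trivial if $V_{0\to\epsilon}=0$; - a $\Lambda_\epsilon$-interleaving is a pair $\alpha\colon V\to W(\epsilon)$, $\beta\colon W\to V(\epsilon)$ with $\beta(\epsilon)\alpha=V_{0\to2\epsilon}$ and $\alpha(\epsilon)\beta=W_{0\to2\epsilon}$. *)

theory Defs
  imports Main "HOL.Real"
begin

datatype lane = L1 | L2

text \<open>MInf = -infinity, PInf = +infinity, Pt r i = (r,i).\<close>
datatype bip = MInf | Pt real lane | PInf

definition bleq :: "bip \<Rightarrow> bip \<Rightarrow> bool" where
  "bleq x y \<longleftrightarrow> x = MInf \<or> y = PInf \<or>
     (\<exists>s t i. x = Pt s i \<and> y = Pt t i \<and> s \<le> t)"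

definition comparable :: "bip \<Rightarrow> bip \<Rightarrow> bool" where
  "comparable x y \<longleftrightarrow> bleq x y \<or> bleq y x"

definition convex_set :: "bip set \<Rightarrow> bool" where
  "convex_set I \<longleftrightarrow> (\<forall>p\<in>I. \<forall>q\<in>I. \<forall>r. bleq p r \<and> bleq r q \<longrightarrow> r \<in> I)"

definition connected_set :: "bip set \<Rightarrow> bool" where
  "connected_set I \<longleftrightarrow> (\<forall>p\<in>I. \<forall>q\<in>I. \<exists>xs. xs \<noteq> [] \<and> hd xs = p \<and> last xs = q \<and>
      set xs \<subseteq> I \<and> (\<forall>n. Suc n < length xs \<longrightarrow> comparable (xs ! n) (xs ! Suc n)))"

definition is_interval :: "bip set \<Rightarrow> bool" where
  "is_interval I \<longleftrightarrow> I \<noteq> {} \<and> convex_set I \<and> connected_set I"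

definition typeU :: "bip set \<Rightarrow> bool" where
  "typeU I \<longleftrightarrow> I \<subseteq> range (\<lambda>r. Pt r L1)"
definition typeD :: "bip set \<Rightarrow> bool" where
  "typeD I \<longleftrightarrow> I \<subseteq> range (\<lambda>r. Pt r L2)"
definition typeB :: "bip set \<Rightarrow> bool" where
  "typeB I \<longleftrightarrow> I = UNIV"
definition typeL :: "bip set \<Rightarrow> bool" where
  "typeL I \<longleftrightarrow> I \<noteq> UNIV \<and> MInf \<in> I"
definition typeR :: "bip set \<Rightarrow> bool" where
  "typeR I \<longleftrightarrow> I \<noteq> UNIV \<and> PInf \<in> I"

definition same_type :: "bip set \<Rightarrow> bip set \<Rightarrow> bool" where
  "same_type I J \<longleftrightarrow> (typeU I \<and> typeU J) \<or> (typeD I \<and> typeD J) \<or> (typeB I \<and> typeB J)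
     \<or> (typeL I \<and> typeL J) \<or> (typeR I \<and> typeR J)"

text \<open>A module V is given by its spaces V_b (here subspaces of the field k itself,
 which suffices for interval modules, whose spaces are k or 0) and structure maps
 V(b,b'). Morphisms are families of k-linear maps V_b \<rightarrow> W_b, compared extensionally
 on the spaces V_b.\<close>

type_synonym 'k pmod = "(bip \<Rightarrow> 'k set) \<times> (bip \<Rightarrow> bip \<Rightarrow> 'k \<Rightarrow> 'k)"

definition spc :: "'k pmod \<Rightarrow> bip \<Rightarrow> 'k set" where "spc V = fst V"
definition smap :: "'k pmod \<Rightarrow> bip \<Rightarrow> bip \<Rightarrow> 'k \<Rightarrow> 'k" where "smap V = snd V"

definition intmod :: "bip set \<Rightarrow> ('k::field) pmod" where
  "intmod I = ((\<lambda>b. if b \<in> I then UNIV else {0}),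
               (\<lambda>b b'. if b \<in> I \<and> b' \<in> I then id else (\<lambda>_. 0)))"

definition lin_on :: "('k::field) set \<Rightarrow> ('k \<Rightarrow> 'k) \<Rightarrow> bool" where
  "lin_on S f \<longleftrightarrow> (\<forall>x\<in>S. \<forall>y\<in>S. f (x + y) = f x + f y) \<and> (\<forall>c. \<forall>x\<in>S. f (c * x) = c * f x)"

definition is_morph :: "('k::field) pmod \<Rightarrow> 'k pmod \<Rightarrow> (bip \<Rightarrow> 'k \<Rightarrow> 'k) \<Rightarrow> bool" where
  "is_morph V W \<phi> \<longleftrightarrow>
     (\<forall>b. (\<forall>x\<in>spc V b. \<phi> b x \<in> spc W b) \<and> lin_on (spc V b) (\<phi> b)) \<and>
     (\<forall>b b'. bleq b b' \<longrightarrow> (\<forall>x\<in>spc V b. smap W b b' (\<phi> b x) = \<phi> b' (smap V b b' x)))"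

definition Lam :: "real \<Rightarrow> bip \<Rightarrow> bip" where
  "Lam e b = (case b of Pt r i \<Rightarrow> Pt (r + e) i | _ \<Rightarrow> b)"

definition shift :: "real \<Rightarrow> 'k pmod \<Rightarrow> 'k pmod" where
  "shift e V = ((\<lambda>b. spc V (Lam e b)), (\<lambda>b b'. smap V (Lam e b) (Lam e b')))"

definition triv :: "real \<Rightarrow> ('k::field) pmod \<Rightarrow> bool" where
  "triv e V \<longleftrightarrow> (\<forall>b. \<forall>x\<in>spc V b. smap V b (Lam e b) x = 0)"

definition interleaving :: "real \<Rightarrow> ('k::field) pmod \<Rightarrow> 'k pmod \<Rightarrow>
    (bip \<Rightarrow> 'k \<Rightarrow> 'k) \<Rightarrow> (bip \<Rightarrow> 'k \<Rightarrow> 'k) \<Rightarrow> bool" where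
  "interleaving e V W \<alpha> \<beta> \<longleftrightarrow>
     is_morph V (shift e W) \<alpha> \<and> is_morph W (shift e V) \<beta> \<and>
     (\<forall>b. \<forall>x\<in>spc V b. \<beta> (Lam e b) (\<alpha> b x) = smap V b (Lam (2 * e) b) x) \<and>
     (\<forall>b. \<forall>x\<in>spc W b. \<alpha> (Lam e b) (\<beta> b x) = smap W b (Lam (2 * e) b) x)"

definition interleaved :: "real \<Rightarrow> ('k::field) pmod \<Rightarrow> 'k pmod \<Rightarrow> bool" where
  "interleaved e V W \<longleftrightarrow> (\<exists>\<alpha> \<beta>. interleaving e V W \<alpha> \<beta>)"

end

theory Submission
  imports Defs
begin

(* If b and b + 2\<epsilon> lie in I, the composite k_I(b) \<rightarrow> k_J(b + \<epsilon>) \<rightarrow> k_I(b + 2\<epsilon>) of an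
   interleaving is the identity of k, so k_J(b + \<epsilon>) \<noteq> 0, i.e. b + \<epsilon> \<in> J.  Applied at the
   fixed points \<plusminus>\<infinity> this shows that I and J contain the same infinities; applied at a point
   b witnessing that k_I is not \<Lambda>_{2\<epsilon>}-trivial it shows that J meets the lane of b.
   Since an interval avoiding both infinities is connected only through comparable
   points, it stays in one lane, and these data determine the type. *)

lemma spc_intmod [simp]: "spc (intmod I) b = (if b \<in> I then UNIV else {0})"
  by (simp add: spc_def intmod_def)

lemma smap_intmod [simp]:
  "smap (intmod I) b b' = (if b \<in> I \<and> b' \<in> I then id else (\<lambda>_. 0))"
  by (simp add: smap_def intmod_def)

lemma spc_shift [simp]: "spc (shift e V) b = spc V (Lam e b)"
  by (simp add: spc_def shift_def)

lemma Lam_MInf [simp]: "Lam e MInf = MInf"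
  and Lam_PInf [simp]: "Lam e PInf = PInf"
  and Lam_Pt [simp]: "Lam e (Pt r i) = Pt (r + e) i"
  by (simp_all add: Lam_def)

lemma lin_on_zero:
  assumes "lin_on S f" and "(0::'k::field) \<in> S"
  shows "f 0 = 0"
proof -
  have "f (0 * 0) = 0 * f 0"
    using assms unfolding lin_on_def by blast
  then show ?thesis by simp
qed

lemma interleaving_sym: "interleaving e V W \<alpha> \<beta> \<Longrightarrow> interleaving e W V \<beta> \<alpha>"
  unfolding interleaving_def by auto

lemma interleaving_intmod_shift_mem:
  fixes \<alpha> \<beta> :: "bip \<Rightarrow> 'k::field \<Rightarrow> 'k"
  assumes K: "interleaving e (intmod I :: 'k pmod) (intmod J) \<alpha> \<beta>"
    and b: "b \<in> I" and b2: "Lam (2 * e) b \<in> I"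
  shows "Lam e b \<in> J"
proof (rule ccontr)
  assume not_J: "Lam e b \<notin> J"
  have \<alpha>: "is_morph (intmod I :: 'k pmod) (shift e (intmod J)) \<alpha>"
    and \<beta>: "is_morph (intmod J :: 'k pmod) (shift e (intmod I)) \<beta>"
    and comp: "\<beta> (Lam e b) (\<alpha> b 1) = smap (intmod I :: 'k pmod) b (Lam (2 * e) b) 1"
    using K b unfolding interleaving_def by auto
  have "\<alpha> b 1 \<in> spc (shift e (intmod J :: 'k pmod)) b"
    using \<alpha> b unfolding is_morph_def by simp
  then have \<alpha>_zero: "\<alpha> b 1 = 0"
    using not_J by simp
  have "\<beta> (Lam e b) 0 = 0"
    using \<beta> by (intro lin_on_zero[of "spc (intmod J) (Lam e b)"]) (auto simp: is_morph_def)
  then show False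
    using comp b b2 by (simp add: \<alpha>_zero)
qed

lemma triv_intmod_iff: "triv e (intmod I :: ('k::field) pmod) \<longleftrightarrow> (\<forall>b\<in>I. Lam e b \<notin> I)"
proof (intro iffI ballI notI)
  fix b assume "triv e (intmod I :: 'k pmod)" and "b \<in> I" and "Lam e b \<in> I"
  then have "\<forall>x\<in>spc (intmod I :: 'k pmod) b. smap (intmod I) b (Lam e b) x = 0"
    unfolding triv_def by blast
  with \<open>b \<in> I\<close> \<open>Lam e b \<in> I\<close> have "(1::'k) = 0" by simp
  then show False by simp
qed (auto simp: triv_def)

lemma convex_set_eq_UNIV:
  assumes "convex_set I" and "MInf \<in> I" and "PInf \<in> I"
  shows "I = UNIV"
  using assms unfolding convex_set_def bleq_def by blast

lemma comparable_Pt_same_lane: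
  assumes "comparable (Pt s i) y" and "y \<noteq> MInf" and "y \<noteq> PInf"
  shows "\<exists>t. y = Pt t i"
  using assms by (cases y) (auto simp: comparable_def bleq_def)

lemma connected_set_subset_lane:
  assumes conn: "connected_set I" and "MInf \<notin> I" and "PInf \<notin> I"
    and s: "Pt s i \<in> I"
  shows "I \<subseteq> range (\<lambda>r. Pt r i)"
proof
  fix x assume "x \<in> I"
  then obtain xs where xs: "xs \<noteq> []" "hd xs = Pt s i" "last xs = x" "set xs \<subseteq> I"
    and chain: "\<forall>n. Suc n < length xs \<longrightarrow> comparable (xs ! n) (xs ! Suc n)"
    using conn s unfolding connected_set_def by blast
  have finite_ends: "y \<noteq> MInf \<and> y \<noteq> PInf" if "y \<in> set xs" for y
    using that xs(4) assms(2,3) by blast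
  have lane: "n < length xs \<Longrightarrow> \<exists>t. xs ! n = Pt t i" for n
  proof (induction n)
    case 0
    then show ?case using xs(1,2) by (simp add: hd_conv_nth[symmetric])
  next
    case (Suc n)
    then obtain t where "xs ! n = Pt t i" by auto
    then have "comparable (Pt t i) (xs ! Suc n)"
      using chain Suc.prems by metis
    then show ?case
      using comparable_Pt_same_lane finite_ends[OF nth_mem[OF Suc.prems]] by blast
  qed
  have "x = xs ! (length xs - 1)"
    using xs(1,3) by (simp add: last_conv_nth)
  moreover obtain t where "xs ! (length xs - 1) = Pt t i"
    using lane xs(1) by fastforce
  ultimately show "x \<in> range (\<lambda>r. Pt r i)" by simp
qed

lemma same_type_if_same_lane:
  assumes "I \<subseteq> range (\<lambda>r. Pt r i)" and "J \<subseteq> range (\<lambda>r. Pt r i)"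
  shows "same_type I J"
  using assms by (cases i) (auto simp: same_type_def typeU_def typeD_def)

lemma same_type_sym: "same_type I J \<Longrightarrow> same_type J I"
  unfolding same_type_def by auto

lemma interleaving_intmod_same_type:
  fixes \<alpha> \<beta> :: "bip \<Rightarrow> 'k::field \<Rightarrow> 'k"
  assumes I: "is_interval I" and J: "is_interval J"
    and K: "interleaving e (intmod I :: 'k pmod) (intmod J) \<alpha> \<beta>"
    and nontriv: "\<not> triv (2 * e) (intmod I :: 'k pmod)"
  shows "same_type I J"
proof -
  obtain b where b: "b \<in> I" and b2: "Lam (2 * e) b \<in> I"
    using nontriv by (auto simp: triv_intmod_iff)
  have K': "interleaving e (intmod J :: 'k pmod) (intmod I) \<beta> \<alpha>"
    using K by (rule interleaving_sym)
  have MInf_iff: "MInf \<in> I \<longleftrightarrow> MInf \<in> J"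
    using interleaving_intmod_shift_mem[OF K, of MInf]
      interleaving_intmod_shift_mem[OF K', of MInf] by auto
  have PInf_iff: "PInf \<in> I \<longleftrightarrow> PInf \<in> J"
    using interleaving_intmod_shift_mem[OF K, of PInf]
      interleaving_intmod_shift_mem[OF K', of PInf] by auto
  consider "MInf \<in> I" "PInf \<in> I" | "MInf \<in> I" "PInf \<notin> I" | "MInf \<notin> I" "PInf \<in> I"
    | "MInf \<notin> I" "PInf \<notin> I" by blast
  then show ?thesis
  proof cases
    case 1
    then show ?thesis
      using I J MInf_iff PInf_iff convex_set_eq_UNIV
      by (simp add: is_interval_def same_type_def typeB_def)
  next
    case 2
    then show ?thesis using MInf_iff PInf_iff by (auto simp: same_type_def typeL_def)
  next
    case 3
    then show ?thesis using MInf_iff PInf_iff by (auto simp: same_type_def typeR_def)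
  next
    case 4
    then obtain s i where bs: "b = Pt s i" using b by (cases b) auto
    have "Pt (s + e) i \<in> J"
      using interleaving_intmod_shift_mem[OF K b b2] bs by simp
    then show ?thesis
      using 4 I J MInf_iff PInf_iff b bs connected_set_subset_lane same_type_if_same_lane
      by (metis is_interval_def)
  qed
qed

theorem lemma4p9:
  fixes I J :: "bip set" and \<epsilon> :: real
  assumes "is_interval I" and "is_interval J" and "\<epsilon> \<ge> 0"
    and "interleaved \<epsilon> (intmod I :: ('k::field) pmod) (intmod J)"
  shows "same_type I J \<or>
         (triv (2 * \<epsilon>) (intmod I :: 'k pmod) \<and> triv (2 * \<epsilon>) (intmod J :: 'k pmod))"
proof -
  obtain \<alpha> \<beta> where K: "interleaving \<epsilon> (intmod I :: 'k pmod) (intmod J) \<alpha> \<beta>"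
    using assms(4) unfolding interleaved_def by blast
  consider "\<not> triv (2 * \<epsilon>) (intmod I :: 'k pmod)" | "\<not> triv (2 * \<epsilon>) (intmod J :: 'k pmod)"
    | "triv (2 * \<epsilon>) (intmod I :: 'k pmod) \<and> triv (2 * \<epsilon>) (intmod J :: 'k pmod)"
    by blast
  then show ?thesis
  proof cases
    case 1
    then show ?thesis
      using interleaving_intmod_same_type[OF assms(1,2) K] by blast
  next
    case 2
    then show ?thesis
      using interleaving_intmod_same_type[OF assms(2,1) interleaving_sym[OF K]] same_type_sym
      by blast
  qed simp
qed

end
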